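(* (Working in $\mathbf{ZF}$.) Every weakly Hausdorff topologically compact generalized topological space is weakly normal.
   Context: A generalized topological space (gts) $(X,\mathrm{Op}_X,\mathrm{Cov}_X)$ is in the sense of Delfs–Knebusch: $\mathrm{Op}_X\subseteq\mathcal P(X)$ contains $\emptyset,X$ and is closed under finite unions and intersections, $\mathrm{Cov}_X$ is a collection of subfamilies of $\mathrm{Op}_X$ (admissible coverings) satisfying the Delfs–Knebusch axioms (finite families are admissible; unions of admissible families are open; admissible families restrict to open subsets of their union, are stable under admissible refinement and under coarsening with the same union; and a set whose traces on all members of an admissible family are open is open). $\mathrm{Cl}_X=\{X\setminus U:U\in\mathrm{Op}_X\}$. The topologization $X_{top}$ is $X$ with the topology generated by $\mathrm{Op}_X$. The gts is topologically compact if $X_{top}$ is compact, and weakly Hausdorff if $X_{top}$ is Hausdorff. It is weakly normal if for every disjoint $A_1,A_2\subseteq X$, each of which is a singleton or a member of $\mathrm{Cl}_X$, there exist disjoint $W_1,W_2\in\mathrm{Op}_X$ with $A_i\subseteq W_i$ ($i=1,2$). *)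

theory Defs
  imports "HOL-Analysis.Analysis"
begin

text \<open>Generalized topological spaces in the sense of Delfs--Knebusch.
  A gts is given by its carrier X, its family of open sets Op and its
  family of admissible coverings Cov.\<close>

definition gts :: "'a set \<Rightarrow> 'a set set \<Rightarrow> 'a set set set \<Rightarrow> bool" where
  "gts X Op Cov \<longleftrightarrow>
     Op \<subseteq> Pow X \<and> {} \<in> Op \<and> X \<in> Op \<and>
     (\<forall>U\<in>Op. \<forall>V\<in>Op. U \<union> V \<in> Op \<and> U \<inter> V \<in> Op) \<and>
     Cov \<subseteq> Pow Op \<and>
     \<comment> \<open>finite families of open sets are admissible\<close>
     (\<forall>F. finite F \<and> F \<subseteq> Op \<longrightarrow> F \<in> Cov) \<and>
     \<comment> \<open>the union of an admissible family is open\<close>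
     (\<forall>F\<in>Cov. \<Union>F \<in> Op) \<and>
     \<comment> \<open>restriction to an open subset of the union\<close>
     (\<forall>F\<in>Cov. \<forall>V\<in>Op. V \<subseteq> \<Union>F \<longrightarrow> (\<lambda>U. U \<inter> V) ` F \<in> Cov) \<and>
     \<comment> \<open>stability under admissible refinement\<close>
     (\<forall>F\<in>Cov. \<forall>G. (\<forall>U\<in>F. G U \<in> Cov \<and> \<Union>(G U) = U) \<longrightarrow> (\<Union>U\<in>F. G U) \<in> Cov) \<and>
     \<comment> \<open>coarsening with the same union\<close>
     (\<forall>F\<in>Cov. \<forall>G. G \<subseteq> Op \<and> \<Union>G = \<Union>F \<and> (\<forall>U\<in>F. \<exists>W\<in>G. U \<subseteq> W) \<longrightarrow> G \<in> Cov) \<and>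
     \<comment> \<open>locality of openness\<close>
     (\<forall>F\<in>Cov. \<forall>V. V \<subseteq> \<Union>F \<and> (\<forall>U\<in>F. V \<inter> U \<in> Op) \<longrightarrow> V \<in> Op)"

definition gts_Cl :: "'a set \<Rightarrow> 'a set set \<Rightarrow> 'a set set" where
  "gts_Cl X Op = {X - U | U. U \<in> Op}"

definition gts_top :: "'a set set \<Rightarrow> 'a topology" where
  "gts_top Op = topology_generated_by Op"

definition topologically_compact :: "'a set \<Rightarrow> 'a set set \<Rightarrow> 'a set set set \<Rightarrow> bool" where
  "topologically_compact X Op Cov \<longleftrightarrow> compact_space (gts_top Op)"

definition weakly_Hausdorff :: "'a set \<Rightarrow> 'a set set \<Rightarrow> 'a set set set \<Rightarrow> bool" where
  "weakly_Hausdorff X Op Cov \<longleftrightarrow> Hausdorff_space (gts_top Op)"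

definition weakly_normal :: "'a set \<Rightarrow> 'a set set \<Rightarrow> 'a set set set \<Rightarrow> bool" where
  "weakly_normal X Op Cov \<longleftrightarrow>
     (\<forall>A1 A2. A1 \<subseteq> X \<and> A2 \<subseteq> X \<and> A1 \<inter> A2 = {} \<and>
        ((\<exists>x. A1 = {x}) \<or> A1 \<in> gts_Cl X Op) \<and>
        ((\<exists>x. A2 = {x}) \<or> A2 \<in> gts_Cl X Op) \<longrightarrow>
        (\<exists>W1\<in>Op. \<exists>W2\<in>Op. W1 \<inter> W2 = {} \<and> A1 \<subseteq> W1 \<and> A2 \<subseteq> W2))"

end

theory Submission
  imports Defs
begin

text \<open>Since \<open>Op\<close> is closed under finite intersections it is a basis of \<open>X\<^sub>t\<^sub>o\<^sub>p\<close>, and since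
  it is closed under finite unions, every \<open>X\<^sub>t\<^sub>o\<^sub>p\<close>-open neighbourhood of a compact set contains
  a member of \<open>Op\<close> containing that set. In the compact Hausdorff space \<open>X\<^sub>t\<^sub>o\<^sub>p\<close>, points and
  members of \<open>Cl\<^sub>X\<close> are closed, hence compact, and two disjoint ones are separated by
  disjoint \<open>X\<^sub>t\<^sub>o\<^sub>p\<close>-open sets by normality; shrinking these to members of \<open>Op\<close> gives the claim.\<close>

lemma topology_generated_by_Int_closed_basis:
  assumes "\<And>U V. U \<in> \<B> \<Longrightarrow> V \<in> \<B> \<Longrightarrow> U \<inter> V \<in> \<B>"
    and "openin (topology_generated_by \<B>) S" and "x \<in> S"
  shows "\<exists>B\<in>\<B>. x \<in> B \<and> B \<subseteq> S"
proof -
  have "generate_topology_on \<B> S"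
    using assms(2) by (rule openin_topology_generated_by)
  from this \<open>x \<in> S\<close> show ?thesis
  proof (induction arbitrary: x)
    case Empty
    then show ?case by simp
  next
    case (Int S T)
    then obtain A B where "A \<in> \<B>" "x \<in> A" "A \<subseteq> S" "B \<in> \<B>" "x \<in> B" "B \<subseteq> T"
      by blast
    then show ?case
      using assms(1) by (intro bexI[of _ "A \<inter> B"]) auto
  next
    case (UN K)
    then obtain k where "k \<in> K" "x \<in> k" by blast
    with UN.IH[of k x] show ?case by blast
  next
    case (Basis S)
    then show ?case by blast
  qed
qed

lemma Union_closed_finite:
  assumes "{} \<in> \<B>" and Un: "\<And>U V. U \<in> \<B> \<Longrightarrow> V \<in> \<B> \<Longrightarrow> U \<union> V \<in> \<B>"
    and "finite F" and "F \<subseteq> \<B>"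
  shows "\<Union>F \<in> \<B>"
  using \<open>finite F\<close> \<open>F \<subseteq> \<B>\<close> by (induction F rule: finite_induct) (simp_all add: assms(1) Un)

lemma compactin_topology_generated_by_lattice_nbhd:
  assumes "{} \<in> \<B>"
    and Int: "\<And>U V. U \<in> \<B> \<Longrightarrow> V \<in> \<B> \<Longrightarrow> U \<inter> V \<in> \<B>"
    and Un: "\<And>U V. U \<in> \<B> \<Longrightarrow> V \<in> \<B> \<Longrightarrow> U \<union> V \<in> \<B>"
    and "compactin (topology_generated_by \<B>) A"
    and "openin (topology_generated_by \<B>) S" and "A \<subseteq> S"
  shows "\<exists>W\<in>\<B>. A \<subseteq> W \<and> W \<subseteq> S"
proof -
  let ?C = "{B \<in> \<B>. B \<subseteq> S}"
  have "\<forall>B\<in>?C. openin (topology_generated_by \<B>) B"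
    by (simp add: topology_generated_by_Basis)
  moreover have "A \<subseteq> \<Union>?C"
    using \<open>A \<subseteq> S\<close> topology_generated_by_Int_closed_basis[OF Int \<open>openin _ S\<close>] by blast
  ultimately obtain F where F: "finite F" "F \<subseteq> ?C" "A \<subseteq> \<Union>F"
    using \<open>compactin _ A\<close> unfolding compactin_def by (elim conjE allE[of _ ?C]) blast
  have "\<Union>F \<in> \<B>"
    using Union_closed_finite[OF \<open>{} \<in> \<B>\<close> Un \<open>finite F\<close>] F(2) by blast
  with F show ?thesis by blast
qed

lemma compact_Hausdorff_topology_generated_by_lattice_separation:
  assumes "{} \<in> \<B>"
    and Int: "\<And>U V. U \<in> \<B> \<Longrightarrow> V \<in> \<B> \<Longrightarrow> U \<inter> V \<in> \<B>"
    and Un: "\<And>U V. U \<in> \<B> \<Longrightarrow> V \<in> \<B> \<Longrightarrow> U \<union> V \<in> \<B>"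
    and compact: "compact_space (topology_generated_by \<B>)"
    and Hausdorff: "Hausdorff_space (topology_generated_by \<B>)"
    and S: "closedin (topology_generated_by \<B>) S" and T: "closedin (topology_generated_by \<B>) T"
    and "S \<inter> T = {}"
  shows "\<exists>W1\<in>\<B>. \<exists>W2\<in>\<B>. W1 \<inter> W2 = {} \<and> S \<subseteq> W1 \<and> T \<subseteq> W2"
proof -
  let ?T = "topology_generated_by \<B>"
  have normal: "normal_space ?T"
    using compact Hausdorff by (simp add: compact_Hausdorff_or_regular_imp_normal_space)
  have "disjnt S T"
    using \<open>S \<inter> T = {}\<close> by (simp add: disjnt_def)
  then obtain U V where U: "openin ?T U" "S \<subseteq> U" and V: "openin ?T V" "T \<subseteq> V"
    and "disjnt U V"
    using normal[unfolded normal_space_def, rule_format, OF conjI[OF S conjI[OF T]]] by blast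
  have "compactin ?T S" "compactin ?T T"
    using compact S T by (simp_all add: closedin_compact_space)
  then obtain W1 W2 where "W1 \<in> \<B>" "S \<subseteq> W1" "W1 \<subseteq> U" "W2 \<in> \<B>" "T \<subseteq> W2" "W2 \<subseteq> V"
    using compactin_topology_generated_by_lattice_nbhd[OF \<open>{} \<in> \<B>\<close> Int Un] U V
    by (metis (no_types))
  moreover have "W1 \<inter> W2 = {}"
    using \<open>disjnt U V\<close> \<open>W1 \<subseteq> U\<close> \<open>W2 \<subseteq> V\<close> by (auto simp: disjnt_def)
  ultimately show ?thesis by blast
qed

lemma gts_lattice:
  assumes "gts X Op Cov"
  shows "{} \<in> Op" and "\<And>U V. U \<in> Op \<Longrightarrow> V \<in> Op \<Longrightarrow> U \<inter> V \<in> Op"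
    and "\<And>U V. U \<in> Op \<Longrightarrow> V \<in> Op \<Longrightarrow> U \<union> V \<in> Op"
  using assms unfolding gts_def by simp_all

lemma gts_topspace:
  assumes "gts X Op Cov"
  shows "topspace (gts_top Op) = X"
proof -
  have "Op \<subseteq> Pow X" "X \<in> Op"
    using assms unfolding gts_def by simp_all
  then show ?thesis
    unfolding gts_top_def by auto
qed

lemma gts_closedin_top:
  assumes "gts X Op Cov" and "weakly_Hausdorff X Op Cov"
    and "A \<subseteq> X" and "(\<exists>x. A = {x}) \<or> A \<in> gts_Cl X Op"
  shows "closedin (gts_top Op) A"
  using assms(4)
proof
  assume "\<exists>x. A = {x}"
  moreover have "t1_space (gts_top Op)"
    using assms(2) unfolding weakly_Hausdorff_def by (rule Hausdorff_imp_t1_space)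
  ultimately show ?thesis
    using \<open>A \<subseteq> X\<close> gts_topspace[OF assms(1)] by (auto simp: t1_space_closedin_singleton)
next
  assume "A \<in> gts_Cl X Op"
  then obtain U where "U \<in> Op" and A: "A = X - U"
    unfolding gts_Cl_def by blast
  have "openin (gts_top Op) U"
    unfolding gts_top_def using \<open>U \<in> Op\<close> by (rule topology_generated_by_Basis)
  then show ?thesis
    using A gts_topspace[OF assms(1)] by (metis closedin_diff closedin_topspace)
qed

theorem proposition3p15:
  fixes X :: "'a set" and Op :: "'a set set" and Cov :: "'a set set set"
  assumes "gts X Op Cov"
    and "weakly_Hausdorff X Op Cov"
    and "topologically_compact X Op Cov"
  shows "weakly_normal X Op Cov"
  unfolding weakly_normal_def
proof (intro allI impI, elim conjE)
  fix A1 A2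
  assume "A1 \<subseteq> X" "A2 \<subseteq> X" "A1 \<inter> A2 = {}"
    and "(\<exists>x. A1 = {x}) \<or> A1 \<in> gts_Cl X Op" "(\<exists>x. A2 = {x}) \<or> A2 \<in> gts_Cl X Op"
  then have "closedin (gts_top Op) A1" "closedin (gts_top Op) A2"
    using gts_closedin_top[OF assms(1,2)] by blast+
  with assms(2,3) \<open>A1 \<inter> A2 = {}\<close>
  show "\<exists>W1\<in>Op. \<exists>W2\<in>Op. W1 \<inter> W2 = {} \<and> A1 \<subseteq> W1 \<and> A2 \<subseteq> W2"
    using compact_Hausdorff_topology_generated_by_lattice_separation[OF gts_lattice[OF assms(1)]]
    unfolding weakly_Hausdorff_def topologically_compact_def gts_top_def by blast
qed

end
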